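(* Let $\alpha>0$, let $\Lambda$ be a finite graph, and let $\Psi$ be a commuting interaction on $\Lambda$ with $\|\Psi\|_{F_\alpha}<\infty$, where $F_\alpha(r)=(1+r)^{-\alpha}$. Then for all disjoint $X,Y\subset\Lambda$, all $A\in\mathcal{A}_X$, $B\in\mathcal{A}_Y$ and all $t\in\mathbb{R}$, $$\big\|[\tau^\Lambda_t(A),B]\big\|\le 4\,\|\Psi\|_{F_\alpha}\,\|A\|\,\|B\|\,|X|\,|Y|\,|t|\,F_\alpha(\mathrm{dist}(X,Y)).$$
   Context: $\Lambda$ has graph distance $d$. Each site carries $\mathbb{C}^q$, $\mathcal{A}_Z=\mathcal{B}(\bigotimes_{x\in Z}\mathbb{C}^q)$ embedded in $\mathcal{A}_\Lambda$ via $A\mapsto A\otimes\mathbf{1}$. An interaction assigns to each $Z\subset\Lambda$ a self-adjoint $\Psi(Z)\in\mathcal{A}_Z$; it is commuting if $[\Psi(Z),\Psi(Z')]=0$ for all $Z,Z'$. $\|\Psi\|_F=\sup_{x,y\in\Lambda}\sum_{Z\ni x,y}\|\Psi(Z)\|/F(d(x,y))$. $H_\Lambda=\sum_{Z\subset\Lambda}\Psi(Z)$ and $\tau^\Lambda_t(A)=e^{itH_\Lambda}Ae^{-itH_\Lambda}$. *)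

theory Defs
  imports "HOL-Analysis.Analysis"
begin

(* Sites: a finite type 'v (the vertex set Lambda); one-site space C^q with basis 'q
   (q = CARD('q)).  The Hilbert space (C^q)^{tensor Lambda} is identified with
   complex ^ ('v => 'q) (functions on configurations), operators with matrices
   complex ^ ('v => 'q) ^ ('v => 'q) acting by *v. *)

type_synonym ('v,'q) op = "complex ^ ('v \<Rightarrow> 'q) ^ ('v \<Rightarrow> 'q)"

definition walk :: "('v \<Rightarrow> 'v \<Rightarrow> bool) \<Rightarrow> nat \<Rightarrow> 'v \<Rightarrow> 'v \<Rightarrow> bool" where
  "walk E n x y \<longleftrightarrow> (\<exists>p::nat \<Rightarrow> 'v. p 0 = x \<and> p n = y \<and>
      (\<forall>i<n. E (p i) (p (Suc i)) \<or> E (p (Suc i)) (p i)))"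

definition connected_graph :: "('v \<Rightarrow> 'v \<Rightarrow> bool) \<Rightarrow> bool" where
  "connected_graph E \<longleftrightarrow> (\<forall>x y. \<exists>n. walk E n x y)"

definition gdist :: "('v \<Rightarrow> 'v \<Rightarrow> bool) \<Rightarrow> 'v \<Rightarrow> 'v \<Rightarrow> nat" where
  "gdist E x y = (LEAST n. walk E n x y)"

definition setdist :: "('v \<Rightarrow> 'v \<Rightarrow> bool) \<Rightarrow> 'v set \<Rightarrow> 'v set \<Rightarrow> nat" where
  "setdist E X Y = Min {gdist E x y | x y. x \<in> X \<and> y \<in> Y}"

definition opnorm :: "('v::finite,'q::finite) op \<Rightarrow> real" where
  "opnorm M = onorm (\<lambda>v. M *v v)"

definition adjoint :: "('v::finite,'q::finite) op \<Rightarrow> ('v,'q) op" where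
  "adjoint M = (\<chi> i j. cnj (M $ j $ i))"

definition cscale :: "complex \<Rightarrow> ('v::finite,'q::finite) op \<Rightarrow> ('v,'q) op" where
  "cscale c M = (\<chi> i j. c * M $ i $ j)"

fun mpow :: "('v::finite,'q::finite) op \<Rightarrow> nat \<Rightarrow> ('v,'q) op" where
  "mpow M 0 = mat 1"
| "mpow M (Suc n) = M ** mpow M n"

definition mexp :: "('v::finite,'q::finite) op \<Rightarrow> ('v,'q) op" where
  "mexp M = (\<Sum>n. (1 / fact n) *\<^sub>R mpow M n)"

definition commutator :: "('v::finite,'q::finite) op \<Rightarrow> ('v,'q) op \<Rightarrow> ('v,'q) op" where
  "commutator A B = A ** B - B ** A"

text \<open>Embedding A \<mapsto> A \<otimes> 1 of an operator on the sites Z: the matrix entries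
  only depend on the restrictions of the configurations to Z, and the operator is the
  identity on the complement of Z.\<close>
definition embed :: "'v set \<Rightarrow> (('v \<Rightarrow> 'q) \<Rightarrow> ('v \<Rightarrow> 'q) \<Rightarrow> complex) \<Rightarrow> ('v::finite,'q::finite) op" where
  "embed Z a = (\<chi> \<sigma> \<sigma>'. if (\<forall>x. x \<notin> Z \<longrightarrow> \<sigma> x = \<sigma>' x)
                          then a (restrict \<sigma> Z) (restrict \<sigma>' Z) else 0)"

definition local_alg :: "'v set \<Rightarrow> ('v::finite,'q::finite) op set" where
  "local_alg Z = range (embed Z)"

definition interaction :: "('v set \<Rightarrow> ('v::finite,'q::finite) op) \<Rightarrow> bool" where
  "interaction \<Psi> \<longleftrightarrow> (\<forall>Z. \<Psi> Z \<in> local_alg Z \<and> adjoint (\<Psi> Z) = \<Psi> Z)"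

definition commuting :: "('v set \<Rightarrow> ('v::finite,'q::finite) op) \<Rightarrow> bool" where
  "commuting \<Psi> \<longleftrightarrow> (\<forall>Z Z'. \<Psi> Z ** \<Psi> Z' = \<Psi> Z' ** \<Psi> Z)"

definition F_alpha :: "real \<Rightarrow> real \<Rightarrow> real" where
  "F_alpha \<alpha> r = (1 + r) powr (- \<alpha>)"

definition interaction_norm ::
  "('v \<Rightarrow> 'v \<Rightarrow> bool) \<Rightarrow> (real \<Rightarrow> real) \<Rightarrow> ('v set \<Rightarrow> ('v::finite,'q::finite) op) \<Rightarrow> real" where
  "interaction_norm E F \<Psi> =
     (SUP xy \<in> (UNIV :: ('v \<times> 'v) set).
        (\<Sum>Z \<in> {Z. fst xy \<in> Z \<and> snd xy \<in> Z}. opnorm (\<Psi> Z)) / F (real (gdist E (fst xy) (snd xy))))"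

definition hamiltonian :: "('v set \<Rightarrow> ('v::finite,'q::finite) op) \<Rightarrow> ('v,'q) op" where
  "hamiltonian \<Psi> = (\<Sum>Z \<in> (UNIV :: 'v set set). \<Psi> Z)"

definition dynamics :: "('v set \<Rightarrow> ('v::finite,'q::finite) op) \<Rightarrow> real \<Rightarrow> ('v,'q) op \<Rightarrow> ('v,'q) op" where
  "dynamics \<Psi> t A = mexp (cscale (\<i> * t) (hamiltonian \<Psi>)) ** A
                      ** mexp (cscale (- \<i> * t) (hamiltonian \<Psi>))"

end

theory Submission
  imports Defs
begin

(* Split the commuting Hamiltonian as S1 + S2 + S3, where S1 collects the terms meeting both
   X and Y, S2 the terms avoiding Y and S3 the terms meeting Y but avoiding X. All terms commute,
   S3 commutes with A and S2 with B, so tau_t(A) = e^(itS1) A' e^(-itS1) with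
   A' = e^(itS2) A e^(-itS2), a unitary conjugate of A that commutes with B. Hence
   [tau_t(A), B] = [tau_t(A) - A', B], and Duhamel's formula bounds ||tau_t(A) - A'|| by
   2 |t| ||S1|| ||A||. Finally ||S1|| is at most the sum over x in X, y in Y of the norms of the
   terms containing both x and y, and each of these sums is at most
   ||Psi||_F F(d(x,y)) <= ||Psi||_F F(dist(X,Y)). *)

section \<open>Operators as a Banach algebra\<close>

text \<open>Bounded operators on a Banach space as a type with a single parameter, so that it can
  be made an instance of real_normed_algebra_1 and the library's exponential applies.\<close>

typedef (overloaded) 'a endo = "UNIV :: ('a::{banach,perfect_space} \<Rightarrow>\<^sub>L 'a) set"
  by auto

setup_lifting type_definition_endo

instantiation endo :: ("{banach,perfect_space}") real_normed_algebra_1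
begin
lift_definition zero_endo :: "'a endo" is 0 .
lift_definition one_endo :: "'a endo" is id_blinfun .
lift_definition plus_endo :: "'a endo \<Rightarrow> 'a endo \<Rightarrow> 'a endo" is "(+)" .
lift_definition minus_endo :: "'a endo \<Rightarrow> 'a endo \<Rightarrow> 'a endo" is "(-)" .
lift_definition uminus_endo :: "'a endo \<Rightarrow> 'a endo" is "uminus" .
lift_definition times_endo :: "'a endo \<Rightarrow> 'a endo \<Rightarrow> 'a endo" is "(o\<^sub>L)" .
lift_definition scaleR_endo :: "real \<Rightarrow> 'a endo \<Rightarrow> 'a endo" is "scaleR" .
lift_definition norm_endo :: "'a endo \<Rightarrow> real" is norm .
definition dist_endo :: "'a endo \<Rightarrow> 'a endo \<Rightarrow> real" where "dist_endo a b = norm (a - b)"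
definition sgn_endo :: "'a endo \<Rightarrow> 'a endo" where "sgn_endo x = scaleR (inverse (norm x)) x"
definition uniformity_endo :: "('a endo \<times> 'a endo) filter" where
  "uniformity_endo = (INF e\<in>{0 <..}. principal {(x, y). dist x y < e})"
definition open_endo :: "'a endo set \<Rightarrow> bool" where
  "open_endo S = (\<forall>x\<in>S. \<forall>\<^sub>F (x', y) in uniformity. x' = x \<longrightarrow> y \<in> S)"
instance
proof
  fix a b c :: "'a endo" and r s :: real
  show "a * b * c = a * (b * c)" by transfer (rule blinfun_eqI, simp)
  show "(a + b) * c = a * c + b * c" by transfer (rule blinfun_eqI, simp add: blinfun.bilinear_simps)
  show "a * (b + c) = a * b + a * c" by transfer (rule blinfun_eqI, simp add: blinfun.bilinear_simps)
  show "r *\<^sub>R a * b = r *\<^sub>R (a * b)" by transfer (rule blinfun_eqI, simp add: blinfun.bilinear_simps)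
  show "a * r *\<^sub>R b = r *\<^sub>R (a * b)" by transfer (rule blinfun_eqI, simp add: blinfun.bilinear_simps)
  show "1 * a = a" by transfer (rule blinfun_eqI, simp)
  show "a * 1 = a" by transfer (rule blinfun_eqI, simp)
  show "(0::'a endo) \<noteq> 1" by transfer (metis norm_blinfun_id norm_zero zero_neq_one)
  show "norm (a * b) \<le> norm a * norm b" by transfer (rule norm_blinfun_compose)
  show "norm (1::'a endo) = 1" by transfer simp
  show "a + b + c = a + (b + c)" by transfer simp
  show "a + b = b + a" by transfer simp
  show "0 + a = a" by transfer simp
  show "- a + a = 0" by transfer simp
  show "a - b = a + - b" by transfer simp
  show "r *\<^sub>R (a + b) = r *\<^sub>R a + r *\<^sub>R b" by transfer (simp add: scaleR_add_right)
  show "(r + s) *\<^sub>R a = r *\<^sub>R a + s *\<^sub>R a" by transfer (simp add: scaleR_add_left)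
  show "r *\<^sub>R s *\<^sub>R a = (r * s) *\<^sub>R a" by transfer simp
  show "1 *\<^sub>R a = a" by transfer simp
  show "sgn a = inverse (norm a) *\<^sub>R a" by (simp add: sgn_endo_def)
  show "dist a b = norm (a - b)" by (simp add: dist_endo_def)
  show "(uniformity :: ('a endo \<times> 'a endo) filter) = (INF e\<in>{0 <..}. principal {(x, y). dist x y < e})"
    by (simp add: uniformity_endo_def)
  show "norm a = 0 \<longleftrightarrow> a = 0" by transfer simp
  show "norm (a + b) \<le> norm a + norm b" by transfer (rule norm_triangle_ineq)
  show "norm (r *\<^sub>R a) = \<bar>r\<bar> * norm a" by transfer simp
next
  fix U :: "'a endo set"
  show "open U = (\<forall>x\<in>U. \<forall>\<^sub>F (x', y) in uniformity. x' = x \<longrightarrow> y \<in> U)"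
    by (simp add: open_endo_def)
qed
end

instance endo :: ("{banach,perfect_space}") banach
proof
  fix X :: "nat \<Rightarrow> 'a endo"
  assume "Cauchy X"
  then have "Cauchy (\<lambda>n. Rep_endo (X n))"
    unfolding Cauchy_def dist_norm by (simp add: norm_endo.rep_eq minus_endo.rep_eq)
  then obtain L where "(\<lambda>n. Rep_endo (X n)) \<longlonglongrightarrow> L"
    using Cauchy_convergent_iff convergent_def by blast
  then have "X \<longlonglongrightarrow> Abs_endo L"
    unfolding LIMSEQ_def dist_norm by (simp add: norm_endo.rep_eq minus_endo.rep_eq Abs_endo_inverse)
  then show "convergent X" by (auto simp: convergent_def)
qed

lemma endo_eqI: "(\<And>v. blinfun_apply (Rep_endo x) v = blinfun_apply (Rep_endo y) v) \<Longrightarrow> x = y"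
  by (metis Rep_endo_inject blinfun_eqI)

definition endo_of :: "('v::finite, 'q::finite) op \<Rightarrow> (complex ^ ('v \<Rightarrow> 'q)) endo" where
  "endo_of M = Abs_endo (Blinfun (\<lambda>v. M *v v))"

lemma endo_of_apply: "blinfun_apply (Rep_endo (endo_of M)) v = M *v v"
  unfolding endo_of_def by (simp add: Abs_endo_inverse bounded_linear_Blinfun_apply)

lemma endo_of_mult: "endo_of (M ** N) = endo_of M * endo_of N"
  by (rule endo_eqI) (simp add: endo_of_apply times_endo.rep_eq matrix_vector_mul_assoc)

lemma endo_of_one: "endo_of (mat 1) = 1"
  by (rule endo_eqI) (simp add: endo_of_apply one_endo.rep_eq)

lemma endo_of_add: "endo_of (M + N) = endo_of M + endo_of N"
  by (rule endo_eqI)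
    (simp add: endo_of_apply plus_endo.rep_eq blinfun.bilinear_simps matrix_vector_mult_add_rdistrib)

lemma endo_of_scaleR: "endo_of (r *\<^sub>R M) = r *\<^sub>R endo_of M"
  by (rule endo_eqI) (simp add: endo_of_apply scaleR_endo.rep_eq blinfun.bilinear_simps vec_eq_iff
      matrix_vector_mult_def scaleR_sum_right)

lemma endo_of_diff: "endo_of (M - N) = endo_of M - endo_of N"
  by (rule endo_eqI) (simp add: endo_of_apply minus_endo.rep_eq blinfun.bilinear_simps vec_eq_iff
      matrix_vector_mult_def sum_subtractf algebra_simps)

lemma endo_of_zero: "endo_of 0 = 0"
  using endo_of_diff[of 0 0] by simp

lemma endo_of_uminus: "endo_of (- M) = - endo_of M"
  using endo_of_diff[of 0 M] by (simp add: endo_of_zero)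

lemma endo_of_sum: "endo_of (sum f S) = (\<Sum>x\<in>S. endo_of (f x))"
  by (induction S rule: infinite_finite_induct) (auto simp: endo_of_zero endo_of_add)

lemma endo_of_inject: "endo_of M = endo_of N \<longleftrightarrow> M = N"
  by (metis endo_of_apply matrix_eq)

lemma norm_endo_of: "norm (endo_of M) = opnorm M"
  by (simp add: norm_endo.rep_eq norm_blinfun.rep_eq opnorm_def endo_of_def Abs_endo_inverse
      bounded_linear_Blinfun_apply)

lemma opnorm_nonneg: "0 \<le> opnorm M"
  using norm_ge_zero[of "endo_of M"] by (simp only: norm_endo_of)

lemma endo_of_mpow: "endo_of (mpow M n) = endo_of M ^ n"
  by (induction n) (simp_all add: endo_of_one endo_of_mult)

lemma bounded_linear_endo_of: "bounded_linear endo_of"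
  unfolding linear_conv_bounded_linear[symmetric]
  by (rule linearI) (simp_all add: endo_of_add endo_of_scaleR)

lemma norm_axis: "norm (axis j x) = norm x"
proof -
  have "(\<Sum>i\<in>UNIV. (norm (axis j x $ i))\<^sup>2) = (\<Sum>i\<in>UNIV. if i = j then (norm x)\<^sup>2 else 0)"
    by (rule sum.cong) (auto simp: axis_def)
  then show ?thesis
    unfolding norm_vec_def L2_set_def by simp
qed

lemma norm_entry_le_opnorm: "norm (M $ i $ j) \<le> opnorm M"
proof -
  have "M $ i $ j = (M *v axis j 1) $ i"
    by (simp add: matrix_vector_mult_def axis_def if_distrib cong: if_cong)
  also have "norm \<dots> \<le> norm (M *v axis j 1)"
    by (rule Finite_Cartesian_Product.norm_nth_le)
  also have "\<dots> \<le> opnorm M * norm (axis j (1::complex))"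
    unfolding opnorm_def by (rule onorm) simp
  finally show ?thesis
    by (simp add: norm_axis)
qed

lemma norm_vec_le_sum_norm: "norm x \<le> (\<Sum>i\<in>UNIV. norm (x $ i))"
  unfolding norm_vec_def by (rule L2_set_le_sum) simp

lemma norm_le_card_opnorm: "norm (M :: ('v::finite, 'q::finite) op) \<le> real (CARD('v \<Rightarrow> 'q)) ^ 2 * opnorm M"
proof -
  have "norm M \<le> (\<Sum>i\<in>UNIV. \<Sum>j\<in>UNIV. norm (M $ i $ j))"
    by (intro order_trans[OF norm_vec_le_sum_norm] sum_mono norm_vec_le_sum_norm)
  also have "\<dots> \<le> (\<Sum>i\<in>(UNIV::('v \<Rightarrow> 'q) set). \<Sum>j\<in>(UNIV::('v \<Rightarrow> 'q) set). opnorm M)"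
    by (intro sum_mono norm_entry_le_opnorm)
  finally show ?thesis
    by (simp add: power2_eq_square)
qed

lemma summable_mexp: "summable (\<lambda>n. (1 / fact n) *\<^sub>R mpow (M::('v::finite, 'q::finite) op) n)"
proof (rule summable_comparison_test')
  let ?C = "real (CARD('v \<Rightarrow> 'q)) ^ 2"
  show "summable (\<lambda>n. ?C * (opnorm M ^ n /\<^sub>R fact n))"
    by (intro summable_mult summable_exp_generic)
  fix n
  have "opnorm (mpow M n) \<le> opnorm M ^ n"
    by (metis endo_of_mpow norm_endo_of norm_power_ineq)
  then have "(1 / fact n) * norm (mpow M n) \<le> (1 / fact n) * (?C * opnorm M ^ n)"
    by (intro mult_left_mono order_trans[OF norm_le_card_opnorm]) auto
  then show "norm ((1 / fact n) *\<^sub>R mpow M n) \<le> ?C * (opnorm M ^ n /\<^sub>R fact n)"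
    by (simp add: field_simps)
qed

lemma endo_of_mexp: "endo_of (mexp M) = exp (endo_of M)"
proof -
  have "endo_of (mexp M) = (\<Sum>n. endo_of ((1 / fact n) *\<^sub>R mpow M n))"
    unfolding mexp_def by (rule bounded_linear.suminf[OF bounded_linear_endo_of summable_mexp])
  also have "\<dots> = (\<Sum>n. endo_of M ^ n /\<^sub>R fact n)"
    by (simp add: endo_of_scaleR endo_of_mpow divide_inverse_commute)
  finally show ?thesis
    by (simp add: exp_def)
qed

section \<open>Adjoints and unitarity\<close>

lemma adjoint_mult: "adjoint (M ** N) = adjoint N ** adjoint M"
  by (simp add: adjoint_def matrix_matrix_mult_def vec_eq_iff mult.commute)

lemma adjoint_one: "adjoint (mat 1 :: ('v::finite, 'q::finite) op) = mat 1"
  by (simp add: adjoint_def mat_def vec_eq_iff)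

lemma mpow_commute: "mpow M n ** M = M ** mpow M n"
  by (induction n) (simp_all add: matrix_mul_assoc[symmetric])

lemma adjoint_mpow: "adjoint (mpow M n) = mpow (adjoint M) n"
  by (induction n) (simp_all add: adjoint_one adjoint_mult mpow_commute)

lemma adjoint_scaleR: "adjoint (r *\<^sub>R M) = r *\<^sub>R adjoint M"
  by (simp add: adjoint_def vec_eq_iff scaleR_conv_of_real[where 'a = complex])

lemma bounded_linear_adjoint: "bounded_linear (adjoint :: ('v::finite, 'q::finite) op \<Rightarrow> _)"
  unfolding linear_conv_bounded_linear[symmetric]
  by (rule linearI) (simp_all add: adjoint_def vec_eq_iff adjoint_scaleR)

lemma adjoint_mexp: "adjoint (mexp M) = mexp (adjoint M)"
proof -
  have "adjoint (mexp M) = (\<Sum>n. adjoint ((1 / fact n) *\<^sub>R mpow M n))"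
    unfolding mexp_def by (rule bounded_linear.suminf[OF bounded_linear_adjoint summable_mexp])
  then show ?thesis
    by (simp add: mexp_def adjoint_scaleR adjoint_mpow)
qed

lemma adjoint_sum: "adjoint (sum f S) = (\<Sum>z\<in>S. adjoint (f z))"
  by (induction S rule: infinite_finite_induct) (auto simp: adjoint_def vec_eq_iff)

lemma adjoint_cscale: "adjoint (cscale c M) = cscale (cnj c) (adjoint M)"
  by (simp add: adjoint_def cscale_def vec_eq_iff)

lemma cscale_of_real_mult: "cscale (of_real r * c) M = r *\<^sub>R cscale c M"
  by (simp add: cscale_def vec_eq_iff scaleR_conv_of_real[where 'a = complex])

lemma cscale_minus: "cscale (- c) M = - cscale c M"
  by (simp add: cscale_def vec_eq_iff)

lemma cscale_sum: "cscale c (sum f S) = (\<Sum>z\<in>S. cscale c (f z))"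
  by (induction S rule: infinite_finite_induct) (auto simp: cscale_def vec_eq_iff distrib_left)

lemma cscale_mult_left: "cscale c M ** N = cscale c (M ** N)"
  by (simp add: cscale_def matrix_matrix_mult_def vec_eq_iff sum_distrib_left mult.assoc)

lemma cscale_mult_right: "M ** cscale c N = cscale c (M ** N)"
  by (simp add: cscale_def matrix_matrix_mult_def vec_eq_iff sum_distrib_left mult.left_commute)

lemma cscale_commute: "M ** N = N ** M \<Longrightarrow> cscale c M ** N = N ** cscale c M"
  by (simp add: cscale_mult_left cscale_mult_right)

lemma opnorm_cscale_le: "opnorm (cscale c M) \<le> cmod c * opnorm M"
  unfolding opnorm_def
proof (rule onorm_le)
  fix v
  have "cscale c M *v v = (\<chi> i. c * (M *v v) $ i)"
    by (simp add: cscale_def matrix_vector_mult_def vec_eq_iff sum_distrib_left mult.assoc)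
  then have "norm (cscale c M *v v) = cmod c * norm (M *v v)"
    by (simp add: norm_vec_def L2_set_right_distrib norm_mult)
  also have "\<dots> \<le> cmod c * (onorm ((*v) M) * norm v)"
    by (intro mult_left_mono onorm) simp_all
  finally show "norm (cscale c M *v v) \<le> cmod c * onorm ((*v) M) * norm v"
    by (simp add: mult.assoc)
qed

definition cinner :: "complex ^ 'n \<Rightarrow> complex ^ 'n \<Rightarrow> complex" where
  "cinner x y = (\<Sum>i\<in>UNIV. cnj (x $ i) * y $ i)"

lemma cinner_matrix_vector_left: "cinner (M *v x) y = cinner x (adjoint M *v y)"
proof -
  have "cinner (M *v x) y = (\<Sum>i\<in>UNIV. \<Sum>j\<in>UNIV. cnj (x $ j) * (cnj (M $ i $ j) * y $ i))"
    unfolding cinner_def matrix_vector_mult_def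
    by (simp add: cnj_sum sum_distrib_left sum_distrib_right mult.commute mult.left_commute)
  also have "\<dots> = (\<Sum>j\<in>UNIV. \<Sum>i\<in>UNIV. cnj (x $ j) * (cnj (M $ i $ j) * y $ i))"
    by (rule sum.swap)
  also have "\<dots> = cinner x (adjoint M *v y)"
    unfolding cinner_def matrix_vector_mult_def adjoint_def by (simp add: sum_distrib_left)
  finally show ?thesis .
qed

lemma cinner_self: "cinner x x = of_real ((norm x)\<^sup>2)"
proof -
  have "(norm x)\<^sup>2 = (\<Sum>i\<in>UNIV. (norm (x $ i))\<^sup>2)"
    unfolding norm_vec_def L2_set_def by (simp add: sum_nonneg)
  then have "of_real ((norm x)\<^sup>2) = (\<Sum>i\<in>UNIV. of_real ((norm (x $ i))\<^sup>2) :: complex)"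
    by simp
  then show ?thesis
    unfolding cinner_def complex_norm_square by (simp add: mult.commute)
qed

lemma norm_unitary_mult:
  assumes "adjoint U ** U = mat 1"
  shows "norm (U *v x) = norm x"
proof -
  have "cinner (U *v x) (U *v x) = cinner x x"
    by (simp add: cinner_matrix_vector_left matrix_vector_mul_assoc assms)
  then have "(norm (U *v x))\<^sup>2 = (norm x)\<^sup>2"
    unfolding cinner_self of_real_eq_iff .
  then show ?thesis
    by (simp add: power2_eq_iff_nonneg)
qed

lemma opnorm_unitary_le:
  assumes "adjoint U ** U = mat 1"
  shows "opnorm U \<le> 1"
  unfolding opnorm_def by (rule onorm_le) (simp add: norm_unitary_mult[OF assms])

lemma norm_exp_selfadjoint_le:
  assumes "adjoint H = H"
  shows "norm (exp (s *\<^sub>R endo_of (cscale \<i> H))) \<le> 1"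
proof -
  let ?K = "cscale (of_real s * \<i>) H"
  have skew: "adjoint ?K = - ?K"
    by (simp add: adjoint_cscale assms cscale_minus[symmetric])
  have "endo_of (adjoint (mexp ?K) ** mexp ?K) = 1"
    by (simp add: adjoint_mexp skew endo_of_mult endo_of_mexp endo_of_uminus exp_minus_inverse
        exp_add_commuting[symmetric])
  then have "opnorm (mexp ?K) \<le> 1"
    by (intro opnorm_unitary_le) (simp add: endo_of_one[symmetric] endo_of_inject)
  moreover have "s *\<^sub>R endo_of (cscale \<i> H) = endo_of ?K"
    by (simp add: cscale_of_real_mult endo_of_scaleR)
  ultimately show ?thesis
    by (simp add: endo_of_mexp[symmetric] norm_endo_of)
qed

section \<open>Conjugation by exponentials in a Banach algebra\<close>

lemma mult_exp_commute:
  fixes x y :: "'a::{real_normed_algebra_1,banach}"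
  assumes "x * y = y * x"
  shows "x * exp y = exp y * x"
proof -
  have s: "summable (\<lambda>n. y ^ n /\<^sub>R fact n)"
    by (rule summable_exp_generic)
  have "x * exp y = (\<Sum>n. x * (y ^ n /\<^sub>R fact n))"
    unfolding exp_def by (rule suminf_mult[OF s, symmetric])
  also have "\<dots> = (\<Sum>n. (y ^ n /\<^sub>R fact n) * x)"
    using power_commuting_commutes[OF assms[symmetric]] by simp
  also have "\<dots> = exp y * x"
    unfolding exp_def by (rule suminf_mult2[OF s, symmetric])
  finally show ?thesis .
qed

definition exp_conj :: "real \<Rightarrow> 'a::{real_normed_algebra_1,banach} \<Rightarrow> 'a \<Rightarrow> 'a" where
  "exp_conj t K a = exp (t *\<^sub>R K) * a * exp ((- t) *\<^sub>R K)"

lemma exp_conj_add_commuting: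
  assumes "K * L = L * K"
  shows "exp_conj t (K + L) a = exp_conj t K (exp_conj t L a)"
proof -
  have split: "exp (s *\<^sub>R (K + L)) = exp (s *\<^sub>R K) * exp (s *\<^sub>R L)" for s
    unfolding scaleR_add_right by (rule exp_add_commuting) (simp add: assms)
  have swap: "exp (s *\<^sub>R K) * exp (s *\<^sub>R L) = exp (s *\<^sub>R L) * exp (s *\<^sub>R K)" for s
    by (rule mult_exp_commute) (simp add: mult_exp_commute assms)
  show ?thesis
    unfolding exp_conj_def split swap[of "- t"] by (simp add: mult.assoc)
qed

lemma exp_conj_commuting:
  assumes "a * K = K * a"
  shows "exp_conj t K a = a"
proof -
  have "exp (t *\<^sub>R K) * a = a * exp (t *\<^sub>R K)"
    by (rule mult_exp_commute[symmetric]) (simp add: assms)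
  then show ?thesis
    unfolding exp_conj_def by (simp add: mult.assoc flip: exp_add_commuting)
qed

lemma exp_conj_commute:
  assumes "b * K = K * b" and "a * b = b * a"
  shows "exp_conj t K a * b = b * exp_conj t K a"
proof -
  have exp_b: "b * exp (s *\<^sub>R K) = exp (s *\<^sub>R K) * b" for s
    by (rule mult_exp_commute) (simp add: assms(1))
  have "exp_conj t K a * b = exp (t *\<^sub>R K) * (a * b) * exp ((- t) *\<^sub>R K)"
    unfolding exp_conj_def by (simp only: mult.assoc exp_b[of "- t", symmetric])
  also have "\<dots> = b * exp_conj t K a"
    unfolding exp_conj_def assms(2) by (simp only: mult.assoc[symmetric] exp_b[of t])
  finally show ?thesis .
qed

lemma norm_exp_conj_le:
  assumes "\<And>s. norm (exp (s *\<^sub>R K)) \<le> 1"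
  shows "norm (exp_conj t K a) \<le> norm a"
proof -
  have "norm (exp_conj t K a) \<le> norm (exp (t *\<^sub>R K)) * norm a * norm (exp ((- t) *\<^sub>R K))"
    unfolding exp_conj_def by (intro order_trans[OF norm_mult_ineq] mult_right_mono norm_mult_ineq) simp
  also have "\<dots> \<le> 1 * norm a * 1"
    by (intro mult_mono assms) auto
  finally show ?thesis
    by simp
qed

lemma has_vector_derivative_exp_conj:
  "((\<lambda>s. exp_conj s K a) has_vector_derivative exp_conj s K (K * a - a * K)) (at s)"
proof -
  have conj_eq: "(\<lambda>s. exp_conj s K a) = (\<lambda>s. (exp (s *\<^sub>R K) * a) * exp (s *\<^sub>R (- K)))"
    by (simp add: exp_conj_def)
  have "exp (s *\<^sub>R (- K)) * K = K * exp (s *\<^sub>R (- K))"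
    by (rule mult_exp_commute[symmetric]) simp
  then have "exp (s *\<^sub>R K) * a * (exp (s *\<^sub>R (- K)) * - K)
      + (exp (s *\<^sub>R K) * 0 + exp (s *\<^sub>R K) * K * a) * exp (s *\<^sub>R (- K))
      = exp_conj s K (K * a - a * K)"
    unfolding exp_conj_def by (simp add: algebra_simps)
  then show ?thesis
    unfolding conj_eq
    by (intro has_vector_derivative_eq_rhs[OF has_vector_derivative_mult[OF has_vector_derivative_mult[OF
          exp_scaleR_has_vector_derivative_right has_vector_derivative_const]
        exp_scaleR_has_vector_derivative_right]])
qed

lemma norm_exp_conj_diff_le:
  assumes contr: "\<And>s. norm (exp (s *\<^sub>R K)) \<le> 1"
  shows "norm (exp_conj t K a - a) \<le> 2 * norm K * norm a * \<bar>t\<bar>"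
proof -
  have deriv_le: "norm (exp_conj s K (K * a - a * K)) \<le> 2 * norm K * norm a" for s
  proof -
    have "norm (exp_conj s K (K * a - a * K)) \<le> norm (K * a) + norm (a * K)"
      by (intro order_trans[OF norm_exp_conj_le[OF contr]] norm_triangle_ineq4)
    also have "\<dots> \<le> norm K * norm a + norm a * norm K"
      by (intro add_mono norm_mult_ineq)
    finally show ?thesis
      by simp
  qed
  have "norm (exp_conj t K a - exp_conj 0 K a) \<le> (2 * norm K * norm a) * norm (t - 0)"
  proof (rule differentiable_bound[where S = UNIV and f' = "\<lambda>s h. h *\<^sub>R exp_conj s K (K * a - a * K)"])
    fix s :: real
    show "((\<lambda>s. exp_conj s K a) has_derivative (\<lambda>h. h *\<^sub>R exp_conj s K (K * a - a * K))) (at s within UNIV)"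
      using has_vector_derivative_exp_conj by (simp add: has_vector_derivative_def)
    show "onorm (\<lambda>h. h *\<^sub>R exp_conj s K (K * a - a * K)) \<le> 2 * norm K * norm a"
      using deriv_le by (intro onorm_le) (simp add: mult.commute mult_left_mono)
  qed auto
  then show ?thesis
    by (simp add: exp_conj_def)
qed

lemma norm_commutator_le_norm_diff:
  fixes x a b :: "'a::real_normed_algebra"
  assumes "a * b = b * a"
  shows "norm (x * b - b * x) \<le> 2 * norm b * norm (x - a)"
proof -
  have "x * b - b * x = (x - a) * b - b * (x - a)"
    by (simp add: algebra_simps assms)
  then have "norm (x * b - b * x) \<le> norm ((x - a) * b) + norm (b * (x - a))"
    by (metis norm_triangle_ineq4)
  also have "\<dots> \<le> norm (x - a) * norm b + norm b * norm (x - a)"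
    by (intro add_mono norm_mult_ineq)
  finally show ?thesis
    by simp
qed

lemma norm_commutator_exp_conj_le:
  assumes "S1 * S2 = S2 * S1" "S1 * S3 = S3 * S1" "S2 * S3 = S3 * S2"
    and "a * S3 = S3 * a" "b * S2 = S2 * b" "a * b = b * a"
    and contr1: "\<And>s. norm (exp (s *\<^sub>R S1)) \<le> 1" and contr2: "\<And>s. norm (exp (s *\<^sub>R S2)) \<le> 1"
  shows "norm (exp_conj t (S1 + S2 + S3) a * b - b * exp_conj t (S1 + S2 + S3) a)
           \<le> 4 * norm S1 * norm a * norm b * \<bar>t\<bar>"
proof -
  define a' where "a' = exp_conj t S2 a"
  have "exp_conj t (S1 + S2 + S3) a = exp_conj t (S1 + S2) (exp_conj t S3 a)"
    using assms(1-3) by (intro exp_conj_add_commuting) (simp add: algebra_simps)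
  also have "\<dots> = exp_conj t S1 a'"
    using assms(1,4) by (simp add: exp_conj_commuting exp_conj_add_commuting a'_def)
  finally have split: "exp_conj t (S1 + S2 + S3) a = exp_conj t S1 a'" .
  have "norm (exp_conj t S1 a' * b - b * exp_conj t S1 a') \<le> 2 * norm b * norm (exp_conj t S1 a' - a')"
    using assms(5,6) by (intro norm_commutator_le_norm_diff) (simp add: exp_conj_commute a'_def)
  also have "\<dots> \<le> 2 * norm b * (2 * norm S1 * norm a' * \<bar>t\<bar>)"
    by (intro mult_left_mono norm_exp_conj_diff_le contr1) simp
  also have "\<dots> \<le> 2 * norm b * (2 * norm S1 * norm a * \<bar>t\<bar>)"
    unfolding a'_def by (intro mult_left_mono mult_right_mono norm_exp_conj_le contr2) auto
  finally show ?thesis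
    by (simp add: split mult_ac)
qed

section \<open>Locality\<close>

lemma embed_mult_embed:
  assumes "Z \<inter> W = {}"
  shows "(embed Z a ** embed W b) $ \<sigma> $ \<tau> =
    (if \<forall>x. x \<notin> Z \<and> x \<notin> W \<longrightarrow> \<sigma> x = \<tau> x
     then a (restrict \<sigma> Z) (restrict \<tau> Z) * b (restrict \<sigma> W) (restrict \<tau> W) else 0)"
    (is "_ = (if ?agree then _ else _)")
proof -
  define \<rho>\<^sub>0 where "\<rho>\<^sub>0 = (\<lambda>x. if x \<in> Z then \<tau> x else \<sigma> x)"
  have middle: "(\<forall>x. x \<notin> Z \<longrightarrow> \<sigma> x = \<rho> x) \<and> (\<forall>x. x \<notin> W \<longrightarrow> \<rho> x = \<tau> x)
      \<longleftrightarrow> \<rho> = \<rho>\<^sub>0 \<and> ?agree" for \<rho>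
    using assms by (auto simp: \<rho>\<^sub>0_def fun_eq_iff) (metis disjoint_iff)+
  have restrict_\<rho>\<^sub>0: "restrict \<rho>\<^sub>0 Z = restrict \<tau> Z" "restrict \<rho>\<^sub>0 W = restrict \<sigma> W"
    using assms by (auto simp: \<rho>\<^sub>0_def restrict_def fun_eq_iff)
  have "(embed Z a ** embed W b) $ \<sigma> $ \<tau> = (\<Sum>\<rho>\<in>UNIV. if \<rho> = \<rho>\<^sub>0 \<and> ?agree
      then a (restrict \<sigma> Z) (restrict \<rho> Z) * b (restrict \<rho> W) (restrict \<tau> W) else 0)"
    unfolding matrix_matrix_mult_def embed_def middle[symmetric] by (auto intro!: sum.cong)
  also have "\<dots> = (if ?agree then a (restrict \<sigma> Z) (restrict \<rho>\<^sub>0 Z) * b (restrict \<rho>\<^sub>0 W) (restrict \<tau> W) else 0)"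
  proof (cases ?agree)
    case False
    then show ?thesis
      by (simp only: False simp_thms if_False sum.neutral_const)
  qed simp
  finally show ?thesis
    by (simp only: restrict_\<rho>\<^sub>0)
qed

lemma embed_commute:
  assumes "Z \<inter> W = {}"
  shows "embed Z a ** embed W b = embed W b ** embed Z a"
proof -
  have "W \<inter> Z = {}"
    using assms by blast
  moreover have "(\<forall>x. x \<notin> W \<and> x \<notin> Z \<longrightarrow> \<sigma> x = \<tau> x) \<longleftrightarrow> (\<forall>x. x \<notin> Z \<and> x \<notin> W \<longrightarrow> \<sigma> x = \<tau> x)"
    for \<sigma> \<tau> :: "'a \<Rightarrow> 'b"
    by blast
  ultimately show ?thesis
    by (auto simp: vec_eq_iff embed_mult_embed assms mult.commute)
qed

lemma local_alg_commute:
  assumes "M \<in> local_alg Z" "N \<in> local_alg W" "Z \<inter> W = {}"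
  shows "M ** N = N ** M"
  using assms embed_commute unfolding local_alg_def by blast

section \<open>Splitting the Hamiltonian\<close>

lemma sum_mult_sum_commute:
  fixes f g :: "_ \<Rightarrow> 'a::semiring_0"
  assumes "\<And>z w. z \<in> A \<Longrightarrow> w \<in> B \<Longrightarrow> f z * g w = g w * f z"
  shows "sum f A * sum g B = sum g B * sum f A"
proof -
  have "sum f A * sum g B = (\<Sum>z\<in>A. \<Sum>w\<in>B. g w * f z)"
    unfolding sum_product using assms by (intro sum.cong) auto
  also have "\<dots> = (\<Sum>w\<in>B. \<Sum>z\<in>A. g w * f z)"
    by (rule sum.swap)
  finally show ?thesis
    by (simp only: sum_product)
qed

definition generator :: "('v set \<Rightarrow> ('v::finite, 'q::finite) op) \<Rightarrow> 'v set set \<Rightarrow> (complex ^ ('v \<Rightarrow> 'q)) endo"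
  where "generator \<Psi> P = (\<Sum>Z\<in>P. endo_of (cscale \<i> (\<Psi> Z)))"

lemma generator_eq: "generator \<Psi> P = endo_of (cscale \<i> (sum \<Psi> P))"
  by (simp add: generator_def cscale_sum endo_of_sum)

lemma endo_of_dynamics: "endo_of (dynamics \<Psi> t A) = exp_conj t (generator \<Psi> UNIV) (endo_of A)"
proof -
  have "endo_of (cscale (\<i> * of_real s) (hamiltonian \<Psi>)) = s *\<^sub>R generator \<Psi> UNIV" for s
    unfolding generator_eq hamiltonian_def mult.commute[of \<i>] cscale_of_real_mult endo_of_scaleR ..
  moreover have "- \<i> * complex_of_real t = \<i> * of_real (- t)"
    by simp
  ultimately show ?thesis
    by (simp only: dynamics_def exp_conj_def endo_of_mult endo_of_mexp)
qed

lemma generator_Un: "P \<inter> Q = {} \<Longrightarrow> generator \<Psi> (P \<union> Q) = generator \<Psi> P + generator \<Psi> Q"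
  by (simp add: generator_def sum.union_disjoint)

lemma generator_commute:
  assumes "commuting \<Psi>"
  shows "generator \<Psi> P * generator \<Psi> Q = generator \<Psi> Q * generator \<Psi> P"
  unfolding generator_def
proof (rule sum_mult_sum_commute)
  fix Z W
  have "\<Psi> W ** \<Psi> Z = \<Psi> Z ** \<Psi> W"
    using assms unfolding commuting_def by blast
  then have "\<Psi> Z ** cscale \<i> (\<Psi> W) = cscale \<i> (\<Psi> W) ** \<Psi> Z"
    by (rule cscale_commute[symmetric])
  then have "cscale \<i> (\<Psi> Z) ** cscale \<i> (\<Psi> W) = cscale \<i> (\<Psi> W) ** cscale \<i> (\<Psi> Z)"
    by (rule cscale_commute)
  then show "endo_of (cscale \<i> (\<Psi> Z)) * endo_of (cscale \<i> (\<Psi> W))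
      = endo_of (cscale \<i> (\<Psi> W)) * endo_of (cscale \<i> (\<Psi> Z))"
    by (simp only: endo_of_mult[symmetric])
qed

lemma generator_commute_local:
  assumes "interaction \<Psi>" and "A \<in> local_alg X" and "\<And>Z. Z \<in> P \<Longrightarrow> Z \<inter> X = {}"
  shows "endo_of A * generator \<Psi> P = generator \<Psi> P * endo_of A"
  unfolding generator_def sum_distrib_left sum_distrib_right
proof (rule sum.cong)
  fix Z
  assume "Z \<in> P"
  moreover have "\<Psi> Z \<in> local_alg Z"
    using assms(1) by (simp add: interaction_def)
  ultimately have "\<Psi> Z ** A = A ** \<Psi> Z"
    using assms(2,3) by (intro local_alg_commute) auto
  then have "cscale \<i> (\<Psi> Z) ** A = A ** cscale \<i> (\<Psi> Z)"
    by (rule cscale_commute)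
  then show "endo_of A * endo_of (cscale \<i> (\<Psi> Z)) = endo_of (cscale \<i> (\<Psi> Z)) * endo_of A"
    by (simp only: endo_of_mult[symmetric])
qed simp

lemma norm_exp_generator_le:
  assumes "interaction \<Psi>"
  shows "norm (exp (s *\<^sub>R generator \<Psi> P)) \<le> 1"
proof -
  have "adjoint (\<Psi> Z) = \<Psi> Z" for Z
    using assms by (simp add: interaction_def)
  then have "adjoint (sum \<Psi> P) = sum \<Psi> P"
    by (simp add: adjoint_sum)
  then show ?thesis
    unfolding generator_eq by (rule norm_exp_selfadjoint_le)
qed

lemma norm_generator_le: "norm (generator \<Psi> P) \<le> (\<Sum>Z\<in>P. opnorm (\<Psi> Z))"
  unfolding generator_def
proof (rule order_trans[OF norm_sum sum_mono])
  fix Z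
  assume "Z \<in> P"
  show "norm (endo_of (cscale \<i> (\<Psi> Z))) \<le> opnorm (\<Psi> Z)"
    using opnorm_cscale_le[of \<i> "\<Psi> Z"] by (simp add: norm_endo_of)
qed

lemma opnorm_commutator_dynamics_le:
  assumes "interaction \<Psi>" "commuting \<Psi>" "X \<inter> Y = {}" "A \<in> local_alg X" "B \<in> local_alg Y"
  shows "opnorm (commutator (dynamics \<Psi> t A) B)
    \<le> 4 * (\<Sum>Z | Z \<inter> X \<noteq> {} \<and> Z \<inter> Y \<noteq> {}. opnorm (\<Psi> Z)) * opnorm A * opnorm B * \<bar>t\<bar>"
proof -
  define P\<^sub>1 where "P\<^sub>1 = {Z. Z \<inter> X \<noteq> {} \<and> Z \<inter> Y \<noteq> {}}"
  define P\<^sub>2 where "P\<^sub>2 = {Z. Z \<inter> Y = {}}"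
  define P\<^sub>3 where "P\<^sub>3 = {Z. Z \<inter> X = {} \<and> Z \<inter> Y \<noteq> {}}"
  have cover: "UNIV = (P\<^sub>1 \<union> P\<^sub>2) \<union> P\<^sub>3"
    by (auto simp: P\<^sub>1_def P\<^sub>2_def P\<^sub>3_def)
  have "generator \<Psi> UNIV = generator \<Psi> (P\<^sub>1 \<union> P\<^sub>2) + generator \<Psi> P\<^sub>3"
    unfolding cover by (rule generator_Un) (auto simp: P\<^sub>1_def P\<^sub>2_def P\<^sub>3_def)
  also have "generator \<Psi> (P\<^sub>1 \<union> P\<^sub>2) = generator \<Psi> P\<^sub>1 + generator \<Psi> P\<^sub>2"
    by (rule generator_Un) (auto simp: P\<^sub>1_def P\<^sub>2_def)
  finally have split: "generator \<Psi> UNIV = generator \<Psi> P\<^sub>1 + generator \<Psi> P\<^sub>2 + generator \<Psi> P\<^sub>3" .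
  have comm: "generator \<Psi> P * generator \<Psi> Q = generator \<Psi> Q * generator \<Psi> P" for P Q
    using assms(2) by (rule generator_commute)
  have contr: "norm (exp (s *\<^sub>R generator \<Psi> P)) \<le> 1" for s P
    using assms(1) by (rule norm_exp_generator_le)
  have A_P\<^sub>3: "endo_of A * generator \<Psi> P\<^sub>3 = generator \<Psi> P\<^sub>3 * endo_of A"
    using assms(1,4) by (rule generator_commute_local) (auto simp: P\<^sub>3_def)
  have B_P\<^sub>2: "endo_of B * generator \<Psi> P\<^sub>2 = generator \<Psi> P\<^sub>2 * endo_of B"
    using assms(1,5) by (rule generator_commute_local) (auto simp: P\<^sub>2_def)
  have AB: "endo_of A * endo_of B = endo_of B * endo_of A"
    using local_alg_commute[OF assms(4,5,3)] by (simp only: endo_of_mult[symmetric])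
  have "norm (endo_of (commutator (dynamics \<Psi> t A) B))
      \<le> 4 * norm (generator \<Psi> P\<^sub>1) * norm (endo_of A) * norm (endo_of B) * \<bar>t\<bar>"
    unfolding commutator_def endo_of_diff endo_of_mult endo_of_dynamics split
    by (rule norm_commutator_exp_conj_le[OF comm comm comm A_P\<^sub>3 B_P\<^sub>2 AB contr contr])
  also have "\<dots> \<le> 4 * (\<Sum>Z\<in>P\<^sub>1. opnorm (\<Psi> Z)) * opnorm A * opnorm B * \<bar>t\<bar>"
    unfolding norm_endo_of by (intro mult_right_mono mult_left_mono norm_generator_le opnorm_nonneg) auto
  finally show ?thesis
    by (simp add: norm_endo_of P\<^sub>1_def)
qed

section \<open>Decay of the boundary terms\<close>

lemma sum_meeting_both_le:
  fixes w :: "'v::finite set \<Rightarrow> real"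
  assumes "\<And>Z. 0 \<le> w Z"
  shows "(\<Sum>Z | Z \<inter> X \<noteq> {} \<and> Z \<inter> Y \<noteq> {}. w Z) \<le> (\<Sum>x\<in>X. \<Sum>y\<in>Y. \<Sum>Z | x \<in> Z \<and> y \<in> Z. w Z)"
proof -
  let ?S = "SIGMA xy : X \<times> Y. {Z. fst xy \<in> Z \<and> snd xy \<in> Z}"
  have "{Z. Z \<inter> X \<noteq> {} \<and> Z \<inter> Y \<noteq> {}} = snd ` ?S"
    by (auto simp: image_iff)
  then have "(\<Sum>Z | Z \<inter> X \<noteq> {} \<and> Z \<inter> Y \<noteq> {}. w Z) \<le> sum (w \<circ> snd) ?S"
    using sum_image_le[of ?S w snd] assms by simp
  also have "\<dots> = (\<Sum>xy\<in>X \<times> Y. \<Sum>Z | fst xy \<in> Z \<and> snd xy \<in> Z. w Z)"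
    by (simp add: sum.Sigma split_def)
  also have "\<dots> = (\<Sum>x\<in>X. \<Sum>y\<in>Y. \<Sum>Z | x \<in> Z \<and> y \<in> Z. w Z)"
    by (simp add: sum.cartesian_product split_def)
  finally show ?thesis .
qed

lemma sum_containing_le_interaction_norm:
  fixes \<Psi> :: "'v set \<Rightarrow> ('v::finite, 'q::finite) op"
  assumes "F (real (gdist E x y)) > 0"
  shows "(\<Sum>Z | x \<in> Z \<and> y \<in> Z. opnorm (\<Psi> Z)) \<le> interaction_norm E F \<Psi> * F (real (gdist E x y))"
proof -
  have "(\<Sum>Z | x \<in> Z \<and> y \<in> Z. opnorm (\<Psi> Z)) / F (real (gdist E x y)) \<le> interaction_norm E F \<Psi>"
    unfolding interaction_norm_def
    by (rule cSUP_upper2[where x = "(x, y)"]) (auto intro: bdd_above_finite)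
  then show ?thesis
    using assms by (simp add: pos_divide_le_eq)
qed

lemma interaction_norm_nonneg:
  fixes \<Psi> :: "'v set \<Rightarrow> ('v::finite, 'q::finite) op"
  assumes "\<And>r. 0 \<le> r \<Longrightarrow> F r > 0"
  shows "0 \<le> interaction_norm E F \<Psi>"
proof -
  fix x :: 'v
  have "0 \<le> (\<Sum>Z | x \<in> Z \<and> x \<in> Z. opnorm (\<Psi> Z))"
    by (intro sum_nonneg opnorm_nonneg)
  also have "\<dots> \<le> interaction_norm E F \<Psi> * F (real (gdist E x x))"
    using assms by (intro sum_containing_le_interaction_norm) simp
  finally show ?thesis
    using assms[of "real (gdist E x x)"] by (simp add: zero_le_mult_iff)
qed

lemma setdist_le_gdist:
  fixes X Y :: "'v::finite set"
  assumes "x \<in> X" "y \<in> Y"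
  shows "setdist E X Y \<le> gdist E x y"
  unfolding setdist_def using assms by (intro Min_le) (auto intro: finite_image_set2)

lemma sum_meeting_both_le_setdist:
  fixes \<Psi> :: "'v set \<Rightarrow> ('v::finite, 'q::finite) op"
  assumes pos: "\<And>r. 0 \<le> r \<Longrightarrow> F r > 0"
    and antimono: "\<And>r s. 0 \<le> r \<Longrightarrow> r \<le> s \<Longrightarrow> F s \<le> F r"
  shows "(\<Sum>Z | Z \<inter> X \<noteq> {} \<and> Z \<inter> Y \<noteq> {}. opnorm (\<Psi> Z))
    \<le> real (card X) * real (card Y) * interaction_norm E F \<Psi> * F (real (setdist E X Y))"
proof -
  have "(\<Sum>Z | x \<in> Z \<and> y \<in> Z. opnorm (\<Psi> Z)) \<le> interaction_norm E F \<Psi> * F (real (setdist E X Y))"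
    if "x \<in> X" "y \<in> Y" for x y
  proof -
    have "(\<Sum>Z | x \<in> Z \<and> y \<in> Z. opnorm (\<Psi> Z)) \<le> interaction_norm E F \<Psi> * F (real (gdist E x y))"
      using pos by (intro sum_containing_le_interaction_norm) simp
    also have "\<dots> \<le> interaction_norm E F \<Psi> * F (real (setdist E X Y))"
      using setdist_le_gdist[OF that] by (intro mult_left_mono antimono interaction_norm_nonneg pos) auto
    finally show ?thesis .
  qed
  then have "(\<Sum>x\<in>X. \<Sum>y\<in>Y. \<Sum>Z | x \<in> Z \<and> y \<in> Z. opnorm (\<Psi> Z))
      \<le> (\<Sum>x\<in>X. \<Sum>y\<in>Y. interaction_norm E F \<Psi> * F (real (setdist E X Y)))"
    by (intro sum_mono) auto
  with sum_meeting_both_le[of "\<lambda>Z. opnorm (\<Psi> Z)" X Y] show ?thesis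
    by (simp add: opnorm_nonneg mult.assoc)
qed

lemma F_alpha_pos: "0 \<le> r \<Longrightarrow> F_alpha \<alpha> r > 0"
  by (simp add: F_alpha_def)

lemma F_alpha_antimono: "0 \<le> \<alpha> \<Longrightarrow> 0 \<le> r \<Longrightarrow> r \<le> s \<Longrightarrow> F_alpha \<alpha> s \<le> F_alpha \<alpha> r"
  unfolding F_alpha_def by (rule powr_mono2') auto

text \<open>Connectivity of E is not needed: for unreachable pairs gdist takes the junk value of
  LEAST on an empty set, and the argument only uses that setdist is a minimum of gdist.\<close>

theorem theorem3p4:
  fixes E :: "'v::finite \<Rightarrow> 'v \<Rightarrow> bool"
    and \<Psi> :: "'v set \<Rightarrow> ('v, 'q::finite) op"
    and \<alpha> t :: real and X Y :: "'v set" and A B :: "('v, 'q) op"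
  assumes "\<alpha> > 0"
    and "connected_graph E"
    and "interaction \<Psi>" and "commuting \<Psi>"
    and "X \<inter> Y = {}"
    and "A \<in> local_alg X" and "B \<in> local_alg Y"
  shows "opnorm (commutator (dynamics \<Psi> t A) B)
           \<le> 4 * interaction_norm E (F_alpha \<alpha>) \<Psi> * opnorm A * opnorm B
               * real (card X) * real (card Y) * \<bar>t\<bar>
               * F_alpha \<alpha> (real (setdist E X Y))"
proof -
  have "opnorm (commutator (dynamics \<Psi> t A) B)
      \<le> 4 * (\<Sum>Z | Z \<inter> X \<noteq> {} \<and> Z \<inter> Y \<noteq> {}. opnorm (\<Psi> Z)) * opnorm A * opnorm B * \<bar>t\<bar>"
    using assms(3-7) by (rule opnorm_commutator_dynamics_le)
  also have "\<dots> \<le> 4 * (real (card X) * real (card Y) * interaction_norm E (F_alpha \<alpha>) \<Psi>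
      * F_alpha \<alpha> (real (setdist E X Y))) * opnorm A * opnorm B * \<bar>t\<bar>"
    using assms(1)
    by (intro mult_right_mono mult_left_mono sum_meeting_both_le_setdist F_alpha_pos F_alpha_antimono
        opnorm_nonneg) auto
  finally show ?thesis
    by (simp only: mult_ac)
qed

end
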